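(* The Steiner point $X_{99}'$ of the cusp triangle $T'=P_1'P_2'P_3'$ is $$X_{99}'=\left(\frac{a^2-2b^2}{a}\cos u,\;-\frac{2a^2-b^2}{b}\sin u\right).$$
   Context: Let $a>b>0$ and $c>0$ with $c^2=a^2-b^2$. Fix $u\in\mathbb{R}$. Let $\Delta_u(t)=(x_u(t),y_u(t))$, where $x_u(t)=\frac1a\big(c^2(1+\cos(t+u))\cos t-a^2\cos u\big)$ and $y_u(t)=\frac1b\big(c^2\cos t\sin(t+u)-c^2\sin t-a^2\sin u\big)$ (the negative pedal curve of the ellipse $x^2/a^2+y^2/b^2=1$ with respect to its point $(a\cos u,b\sin u)$). For $i=1,2,3$ let $t_i=-u/3-2\pi(i-1)/3$ and $P_i'=\Delta_u(t_i)$. The Steiner circumellipse of a triangle is the ellipse through its vertices centered at its centroid; the Steiner point $X_{99}$ of a triangle is the fourth common point (counted with multiplicity) of its circumcircle and its Steiner circumellipse, besides the three vertices. *)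

theory Defs
  imports Complex_Main
begin

definition conic_eval :: "complex \<Rightarrow> real \<Rightarrow> real \<Rightarrow> real \<Rightarrow> complex \<Rightarrow> complex \<Rightarrow> complex" where
  "conic_eval G m11 m12 m22 x y =
     (let X = x - complex_of_real (Re G); Y = y - complex_of_real (Im G) in
      complex_of_real m11 * X^2 + 2 * complex_of_real m12 * X * Y
      + complex_of_real m22 * Y^2 - 1)"

text \<open>Steiner circumellipse: the ellipse centred at the centroid G through A, B, C,
  written as {p. (p-G)^T M (p-G) = 1} with M symmetric positive definite.\<close>
definition steiner_circumellipse :: "complex \<Rightarrow> complex \<Rightarrow> complex \<Rightarrow> real \<Rightarrow> real \<Rightarrow> real \<Rightarrow> bool" where
  "steiner_circumellipse A B C m11 m12 m22 \<longleftrightarrow>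
     m11 > 0 \<and> m11 * m22 - m12^2 > 0 \<and>
     (\<forall>P\<in>{A,B,C}. conic_eval ((A + B + C) / 3) m11 m12 m22
                     (complex_of_real (Re P)) (complex_of_real (Im P)) = 0)"

definition circumcircle :: "complex \<Rightarrow> complex \<Rightarrow> complex \<Rightarrow> complex \<Rightarrow> real \<Rightarrow> bool" where
  "circumcircle A B C Z R \<longleftrightarrow> R > 0 \<and> cmod (A - Z) = R \<and> cmod (B - Z) = R \<and> cmod (C - Z) = R"

text \<open>Steiner point X99: the fourth common point, counted with multiplicity, of the
  circumcircle and the Steiner circumellipse. Multiplicity is made precise by the rational
  parametrisation w \<mapsto> Z + R w of the circumcircle (w on the unit circle; x = Re Z + R (w + 1/w)/2,
  y = Im Z + R (w - 1/w)/(2i)): w^2 times the ellipse equation is a quartic polynomial in w whose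
  roots (with multiplicity) are w1, w2, w3 (the vertices) and w4 (the Steiner point).\<close>
definition steiner_point :: "complex \<Rightarrow> complex \<Rightarrow> complex \<Rightarrow> complex \<Rightarrow> bool" where
  "steiner_point A B C X \<longleftrightarrow> A \<noteq> B \<and> B \<noteq> C \<and> A \<noteq> C \<and>
     (\<exists>Z R m11 m12 m22 w1 w2 w3 w4 k.
        circumcircle A B C Z R \<and> steiner_circumellipse A B C m11 m12 m22 \<and>
        A = Z + complex_of_real R * w1 \<and> B = Z + complex_of_real R * w2 \<and>
        C = Z + complex_of_real R * w3 \<and> X = Z + complex_of_real R * w4 \<and> k \<noteq> 0 \<and>
        (\<forall>w::complex. w \<noteq> 0 \<longrightarrow>
           w^2 * conic_eval ((A + B + C) / 3) m11 m12 m22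
                   (complex_of_real (Re Z) + complex_of_real R * (w + 1/w) / 2)
                   (complex_of_real (Im Z) + complex_of_real R * (w - 1/w) / (2 * \<i>))
           = k * (w - w1) * (w - w2) * (w - w3) * (w - w4)))"

text \<open>The negative pedal curve of the ellipse x^2/a^2+y^2/b^2=1 w.r.t. (a cos u, b sin u).\<close>
definition neg_pedal :: "real \<Rightarrow> real \<Rightarrow> real \<Rightarrow> real \<Rightarrow> complex" where
  "neg_pedal a b u t = (let c2 = a^2 - b^2 in
     Complex ((c2 * (1 + cos (t + u)) * cos t - a^2 * cos u) / a)
             ((c2 * cos t * sin (t + u) - c2 * sin t - a^2 * sin u) / b))"

definition cusp :: "real \<Rightarrow> real \<Rightarrow> real \<Rightarrow> nat \<Rightarrow> complex" where
  "cusp a b u i = neg_pedal a b u (- u / 3 - 2 * pi * (real i - 1) / 3)"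

end

theory Submission
  imports Defs
begin

text \<open>At a cusp parameter t (3t + u \<in> 2\<pi>\<int>) the negative pedal point is
  O + (A cos t, -B sin t), so the three cusps are the points with parameters s, s + 2\<pi>/3,
  s + 4\<pi>/3 (s = u/3) on an axis-aligned ellipse E(\<theta>) = O + (A cos \<theta>, B sin \<theta>).
  Their centroid is O, so this ellipse is their Steiner circumellipse, and the identity
  cos 2\<theta> = cos 3\<theta> cos \<theta> + sin 3\<theta> sin \<theta> shows that E(\<theta>) has constant distance from a
  centre depending only on 3\<theta>, which gives the circumcircle. Parametrising the circle by
  w \<mapsto> Z + R w turns the ellipse equation into a quartic in w with the three vertices as
  roots; Vieta's formula for the w^3 coefficient yields the fourth root, which is E(-3s) = E(-u).\<close>

lemma quartic_factor_three_roots: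
  fixes c0 c1 c2 c3 c4 w w1 w2 w3 :: "'a::field"
  assumes "c4 \<noteq> 0" and "w1 \<noteq> w2" "w1 \<noteq> w3" "w2 \<noteq> w3"
    and "\<And>z. z \<in> {w1, w2, w3} \<Longrightarrow> c4*z^4 + c3*z^3 + c2*z^2 + c1*z + c0 = 0"
  shows "c4*w^4 + c3*w^3 + c2*w^2 + c1*w + c0
         = c4 * (w - w1) * (w - w2) * (w - w3) * (w - (- c3/c4 - (w1 + w2 + w3)))"
proof -
  define r where "r = - c3/c4 - (w1 + w2 + w3)"
  define e2 where "e2 = c2 - c4*(w1*w2 + w1*w3 + w2*w3 + r*(w1 + w2 + w3))"
  define e1 where "e1 = c1 + c4*(w1*w2*w3 + r*(w1*w2 + w1*w3 + w2*w3))"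
  define e0 where "e0 = c0 - c4*w1*w2*w3*r"
  have c3: "c3 = - c4 * (r + w1 + w2 + w3)"
    using assms(1) unfolding r_def by (simp add: field_simps)
  \<comment> \<open>The difference of the two sides is a quadratic with three distinct roots.\<close>
  have diff: "c4*z^4 + c3*z^3 + c2*z^2 + c1*z + c0 - c4 * (z-w1)*(z-w2)*(z-w3)*(z-r)
      = e2*z^2 + e1*z + e0" for z
    unfolding e2_def e1_def e0_def c3
    by (simp add: algebra_simps power2_eq_square power3_eq_cube power4_eq_xxxx)
  have roots: "e2*w1^2 + e1*w1 + e0 = 0" "e2*w2^2 + e1*w2 + e0 = 0" "e2*w3^2 + e1*w3 + e0 = 0"
    using diff[of w1] diff[of w2] diff[of w3] assms(5)[of w1] assms(5)[of w2] assms(5)[of w3]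
    by simp_all
  have factor: "(x - y) * (e2*(x + y) + e1) = (e2*x^2 + e1*x + e0) - (e2*y^2 + e1*y + e0)" for x y
    by (simp add: algebra_simps power2_eq_square)
  have "(w1 - w2) * (e2*(w1 + w2) + e1) = 0" "(w1 - w3) * (e2*(w1 + w3) + e1) = 0"
    unfolding factor roots by simp_all
  then have "e2*(w1 + w2) + e1 = 0" "e2*(w1 + w3) + e1 = 0" using assms(2,3) by simp_all
  moreover have "e2 * (w2 - w3) = (e2*(w1 + w2) + e1) - (e2*(w1 + w3) + e1)"
    by (simp add: algebra_simps)
  ultimately have "e2 = 0" "e1 = 0" using assms(4) by simp_all
  moreover have "e0 = 0" using roots(1) calculation by simp
  ultimately show ?thesis using diff[of w] unfolding r_def by simp
qed

lemma circle_param_of_point: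
  fixes P Z :: complex and R :: real
  assumes "cmod (P - Z) = R" "R > 0"
  defines "w \<equiv> (P - Z) / complex_of_real R"
  shows "complex_of_real (Re Z) + complex_of_real R * (w + 1/w) / 2 = complex_of_real (Re P)"
    and "complex_of_real (Im Z) + complex_of_real R * (w - 1/w) / (2*\<i>) = complex_of_real (Im P)"
proof -
  have "cmod w = 1" using assms unfolding w_def by (simp add: norm_divide)
  then have "w * cnj w = 1" using complex_norm_square[of w] by simp
  then have inv: "1/w = cnj w"
    by (metis nonzero_mult_div_cancel_left divide_self_if mult_zero_left zero_neq_one)
  have P: "P = Z + complex_of_real R * w" using assms unfolding w_def by simp
  show "complex_of_real (Re Z) + complex_of_real R * (w + 1/w) / 2 = complex_of_real (Re P)"
    unfolding inv complex_add_cnj P by (simp add: complex_eq_iff)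
  show "complex_of_real (Im Z) + complex_of_real R * (w - 1/w) / (2*\<i>) = complex_of_real (Im P)"
    unfolding inv complex_diff_cnj P by (simp add: complex_eq_iff)
qed

lemma conic_eval_circle_param:
  fixes G w dx dy :: complex and m11 m22 x0 y0 R :: real
  assumes "w \<noteq> 0"
  defines "dx \<equiv> complex_of_real (x0 - Re G)" and "dy \<equiv> complex_of_real (y0 - Im G)"
  shows "w^2 * conic_eval G m11 0 m22 (complex_of_real x0 + complex_of_real R * (w + 1/w) / 2)
                 (complex_of_real y0 + complex_of_real R * (w - 1/w) / (2 * \<i>))
   = (R^2*(m11-m22)/4) * w^4 + (R*(m11*dx - \<i>*m22*dy)) * w^3
     + (m11*(dx^2 + R^2/2) + m22*(dy^2 + R^2/2) - 1) * w^2 + (R*(m11*dx + \<i>*m22*dy)) * w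
     + R^2*(m11-m22)/4"
  using assms(1) unfolding conic_eval_def Let_def dx_def dy_def
  by (simp add: field_simps power2_eq_square power3_eq_cube power4_eq_xxxx)

lemma steiner_point_axis_aligned:
  fixes P1 P2 P3 Z :: complex and R m11 m22 :: real
  assumes distinct: "P1 \<noteq> P2" "P2 \<noteq> P3" "P1 \<noteq> P3"
    and circ: "circumcircle P1 P2 P3 Z R"
    and ell: "steiner_circumellipse P1 P2 P3 m11 0 m22" and noncircular: "m11 \<noteq> m22"
  defines "d \<equiv> Z - (P1 + P2 + P3) / 3"
  shows "steiner_point P1 P2 P3
           (Z + 3 * d - 4 * Complex (m11 * Re d) (- m22 * Im d) / complex_of_real (m11 - m22))"
proof -
  define G where "G = (P1 + P2 + P3) / 3"
  define dx where "dx = complex_of_real (Re Z - Re G)"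
  define dy where "dy = complex_of_real (Im Z - Im G)"
  define k4 where "k4 = complex_of_real (R^2*(m11-m22)/4)"
  define k3 where "k3 = R*(m11*dx - \<i>*m22*dy)"
  define k2 where "k2 = m11*(dx^2 + R^2/2) + m22*(dy^2 + R^2/2) - 1"
  define k1 where "k1 = R*(m11*dx + \<i>*m22*dy)"
  define F where "F w = w^2 * conic_eval G m11 0 m22
     (complex_of_real (Re Z) + complex_of_real R * (w + 1/w) / 2)
     (complex_of_real (Im Z) + complex_of_real R * (w - 1/w) / (2 * \<i>))" for w
  define w where "w P = (P - Z) / complex_of_real R" for P
  have R: "R > 0" and on_circle: "\<And>P. P \<in> {P1, P2, P3} \<Longrightarrow> cmod (P - Z) = R"
    using circ unfolding circumcircle_def by auto
  have on_ellipse: "\<And>P. P \<in> {P1, P2, P3} \<Longrightarrow>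
      conic_eval G m11 0 m22 (complex_of_real (Re P)) (complex_of_real (Im P)) = 0"
    using ell unfolding steiner_circumellipse_def G_def by blast
  have F_poly: "F z = k4*z^4 + k3*z^3 + k2*z^2 + k1*z + k4" if "z \<noteq> 0" for z
    unfolding F_def k4_def k3_def k2_def k1_def dx_def dy_def
    using conic_eval_circle_param[OF that] by simp
  have w_nonzero: "w P \<noteq> 0" if "P \<in> {P1, P2, P3}" for P
    using on_circle[OF that] R unfolding w_def by auto
  have "F (w P) = 0" if "P \<in> {P1, P2, P3}" for P
    unfolding F_def w_def circle_param_of_point[OF on_circle[OF that] R] on_ellipse[OF that] by simp
  then have roots: "k4*z^4 + k3*z^3 + k2*z^2 + k1*z + k4 = 0" if "z \<in> {w P1, w P2, w P3}" for z
    using that F_poly w_nonzero by auto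
  have "k4 \<noteq> 0" unfolding k4_def using R noncircular by simp
  moreover have "w P1 \<noteq> w P2" "w P1 \<noteq> w P3" "w P2 \<noteq> w P3"
    using distinct R unfolding w_def by (auto simp: divide_simps)
  ultimately have factored: "F z = k4 * (z - w P1) * (z - w P2) * (z - w P3)
      * (z - (- k3/k4 - (w P1 + w P2 + w P3)))" if "z \<noteq> 0" for z
    using F_poly[OF that] quartic_factor_three_roots[OF _ _ _ _ roots] by simp
  have "Z + complex_of_real R * (- k3/k4 - (w P1 + w P2 + w P3))
      = Z + 3 * d - 4 * Complex (m11 * Re d) (- m22 * Im d) / complex_of_real (m11 - m22)"
    unfolding k3_def k4_def w_def d_def dx_def dy_def G_def using R noncircular
    by (simp add: field_simps complex_eq_iff power2_eq_square)
  moreover have "P = Z + complex_of_real R * w P" for P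
    using R unfolding w_def by simp
  ultimately show ?thesis
    unfolding steiner_point_def
    apply (intro conjI distinct)
    apply (rule exI[of _ Z], rule exI[of _ R], rule exI[of _ m11], rule exI[of _ "0::real"],
        rule exI[of _ m22], rule exI[of _ "w P1"], rule exI[of _ "w P2"], rule exI[of _ "w P3"],
        rule exI[of _ "- k3/k4 - (w P1 + w P2 + w P3)"], rule exI[of _ k4])
    using circ ell \<open>k4 \<noteq> 0\<close> factored unfolding F_def G_def by auto
qed

definition ellipse_point :: "complex \<Rightarrow> real \<Rightarrow> real \<Rightarrow> real \<Rightarrow> complex" where
  "ellipse_point z0 A B t = z0 + Complex (A * cos t) (B * sin t)"

lemma cos_sin_thirds_of_two_pi:
  "cos (2*pi/3) = -1/2" "sin (2*pi/3) = sqrt 3/2"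
  "cos (4*pi/3) = -1/2" "sin (4*pi/3) = - sqrt 3/2"
proof -
  show "cos (2*pi/3) = -1/2" "sin (2*pi/3) = sqrt 3/2"
    using cos_120 sin_120' by (simp_all add: mult.commute)
  have "4*pi/3 = pi/3 + pi" by simp
  then show "cos (4*pi/3) = -1/2" "sin (4*pi/3) = - sqrt 3/2"
    by (simp_all only: cos_add sin_add) (simp_all add: cos_60 sin_60)
qed

lemma cos_sin_sum_thirds:
  "cos t + cos (t + 2*pi/3) + cos (t + 4*pi/3) = 0"
  "sin t + sin (t + 2*pi/3) + sin (t + 4*pi/3) = 0"
  by (simp_all add: cos_add sin_add cos_sin_thirds_of_two_pi)

lemma ellipse_point_thirds_centroid:
  "(ellipse_point z0 A B t + ellipse_point z0 A B (t + 2*pi/3)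
     + ellipse_point z0 A B (t + 4*pi/3)) / 3 = z0"
  using cos_sin_sum_thirds[of t] unfolding ellipse_point_def complex_eq_iff
  by (simp add: algebra_simps flip: distrib_left)

lemma ellipse_point_eq_imp_cos_diff:
  assumes "A \<noteq> 0" "B \<noteq> 0" "ellipse_point z0 A B t = ellipse_point z0 A B t'"
  shows "cos (t - t') = 1"
proof -
  have "cos t = cos t'" "sin t = sin t'"
    using assms unfolding ellipse_point_def complex_eq_iff by auto
  then show ?thesis
    unfolding cos_diff using sin_cos_squared_add[of t'] by (simp add: power2_eq_square)
qed

lemma ellipse_point_on_conic:
  assumes "A \<noteq> 0" "B \<noteq> 0"
  shows "conic_eval z0 (1/A^2) 0 (1/B^2)
           (complex_of_real (Re (ellipse_point z0 A B t)))
           (complex_of_real (Im (ellipse_point z0 A B t))) = 0"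
proof -
  have "(A * cos t)^2 / A^2 + (B * sin t)^2 / B^2 = 1"
    using assms by (simp add: power_mult_distrib)
  then show ?thesis unfolding conic_eval_def ellipse_point_def Let_def
    by (simp flip: of_real_power of_real_mult of_real_add of_real_diff of_real_divide)
qed

lemma ellipse_point_concyclic:
  fixes z0 :: complex and A B t :: real
  assumes "A \<noteq> 0" "B \<noteq> 0"
  defines "p \<equiv> (A^2 - B^2) * cos (3*t) / (4*A)"
    and "q \<equiv> (A^2 - B^2) * sin (3*t) / (4*B)"
  shows "cmod (ellipse_point z0 A B t - (z0 + Complex p q)) = sqrt ((A^2 + B^2)/2 + p^2 + q^2)"
proof -
  have "cos (2*t) = cos (3*t) * cos t + sin (3*t) * sin t"
    using cos_diff[of "3*t" t] by simp
  then have cross: "2*A*p * cos t + 2*B*q * sin t = (A^2 - B^2)/2 * cos (2*t)"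
    unfolding p_def q_def using assms by (simp add: field_simps)
  have "(A * cos t)^2 + (B * sin t)^2 = (A^2 + B^2)/2 + (A^2 - B^2)/2 * cos (2*t)"
    unfolding cos_double_cos power_mult_distrib sin_squared_eq by (simp add: field_simps)
  then have "(A * cos t - p)^2 + (B * sin t - q)^2 = (A^2 + B^2)/2 + p^2 + q^2"
    using cross by (simp add: power2_diff algebra_simps)
  then show ?thesis unfolding ellipse_point_def cmod_def by simp
qed

lemma steiner_point_ellipse_thirds:
  fixes z0 :: complex and A B s :: real
  assumes A: "A > 0" and B: "B > 0" and noncircular: "A \<noteq> B"
  shows "steiner_point (ellipse_point z0 A B s) (ellipse_point z0 A B (s + 2*pi/3))
           (ellipse_point z0 A B (s + 4*pi/3)) (ellipse_point z0 A B (-3*s))"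
proof -
  define E where "E = ellipse_point z0 A B"
  define p where "p = (A^2 - B^2) * cos (3*s) / (4*A)"
  define q where "q = (A^2 - B^2) * sin (3*s) / (4*B)"
  define Z where "Z = z0 + Complex p q"
  define R where "R = sqrt ((A^2 + B^2)/2 + p^2 + q^2)"
  have "3*(s + 2*pi/3) = 3*s + 2*pi*of_int 1" "3*(s + 4*pi/3) = 3*s + 2*pi*of_int 2"
    by (simp_all add: algebra_simps)
  then have treble: "cos (3*t) = cos (3*s)" "sin (3*t) = sin (3*s)"
    if "t \<in> {s, s + 2*pi/3, s + 4*pi/3}" for t
    using that by (auto simp only: cos_add sin_add cos_int_2pin sin_int_2pin insert_iff)
  have circle: "cmod (E t - Z) = R" if "t \<in> {s, s + 2*pi/3, s + 4*pi/3}" for t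
    using ellipse_point_concyclic[of A B z0 t] A B
    unfolding E_def Z_def R_def p_def q_def treble[OF that] by simp
  have "cos (s - (s + 2*pi/3)) \<noteq> 1" "cos ((s + 2*pi/3) - (s + 4*pi/3)) \<noteq> 1"
      "cos (s - (s + 4*pi/3)) \<noteq> 1"
    by (simp_all add: cos_sin_thirds_of_two_pi)
  moreover have "A \<noteq> 0" "B \<noteq> 0" using A B by simp_all
  ultimately have distinct:
      "E s \<noteq> E (s + 2*pi/3)" "E (s + 2*pi/3) \<noteq> E (s + 4*pi/3)" "E s \<noteq> E (s + 4*pi/3)"
    using ellipse_point_eq_imp_cos_diff unfolding E_def by blast+
  have "R > 0" unfolding R_def using A B by (simp add: add_pos_nonneg)
  then have circ: "circumcircle (E s) (E (s + 2*pi/3)) (E (s + 4*pi/3)) Z R"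
    unfolding circumcircle_def using circle by simp
  have ell: "steiner_circumellipse (E s) (E (s + 2*pi/3)) (E (s + 4*pi/3)) (1/A^2) 0 (1/B^2)"
    unfolding steiner_circumellipse_def E_def ellipse_point_thirds_centroid
    using ellipse_point_on_conic A B by simp
  have "1/A^2 \<noteq> 1/B^2" using A B noncircular by (auto simp: power2_eq_iff)
  note steiner_point_axis_aligned[OF distinct(1,2,3) circ ell this]
  moreover have "Z - (E s + E (s + 2*pi/3) + E (s + 4*pi/3)) / 3 = Complex p q"
    unfolding E_def ellipse_point_thirds_centroid Z_def by simp
  moreover have "Z + 3 * Complex p q - 4 * Complex (1/A^2 * p) (- (1/B^2) * q)
      / complex_of_real (1/A^2 - 1/B^2) = E (-3*s)"
  proof -
    have "A^2 - B^2 \<noteq> 0" using \<open>1/A^2 \<noteq> 1/B^2\<close> by auto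
    then have "4*p - 4*(p/A^2)/(1/A^2 - 1/B^2) = A * cos (3*s)"
        "4*q + 4*(q/B^2)/(1/A^2 - 1/B^2) = - B * sin (3*s)"
      unfolding p_def q_def using A B by (simp_all add: field_simps power2_eq_square)
    then show ?thesis
      unfolding E_def ellipse_point_def Z_def Complex_divide_complex_of_real complex_eq_iff by simp
  qed
  ultimately show ?thesis unfolding E_def by simp
qed

definition cusp_ellipse :: "real \<Rightarrow> real \<Rightarrow> real \<Rightarrow> real \<Rightarrow> complex" where
  "cusp_ellipse a b u = ellipse_point
     (Complex (- (a^2 + b^2) / (2*a) * cos u) (- (a^2 + b^2) / (2*b) * sin u))
     (3 * (a^2 - b^2) / (2*a)) (3 * (a^2 - b^2) / (2*b))"

lemma neg_pedal_eq_cusp_ellipse: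
  fixes a b u t :: real
  assumes a: "a \<noteq> 0" and b: "b \<noteq> 0"
    and cu: "cos u = cos (3*t)" and su: "sin u = - sin (3*t)"
  shows "neg_pedal a b u t = cusp_ellipse a b u (- t)"
proof -
  have "cos (t + u) = cos (3*t - t)" "sin (t + u) = sin (t - 3*t)"
    unfolding cos_add sin_add cos_diff sin_diff cu su by simp_all
  then have ctu: "cos (t + u) = 2 * cos t ^ 2 - 1" and stu: "sin (t + u) = - (2 * sin t * cos t)"
    by (simp_all add: cos_double_cos flip: sin_double)
  have "sin (3*t) = sin (2*t + t)" by simp
  then have s3: "sin (3*t) = 4 * sin t * cos t ^ 2 - sin t"
    unfolding sin_add sin_double cos_double_cos by (simp add: algebra_simps power2_eq_square)
  show ?thesis
    unfolding neg_pedal_def cusp_ellipse_def ellipse_point_def Let_def complex_eq_iff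
      ctu stu su s3 cu cos_treble_cos
    using a b by (simp add: field_simps power2_eq_square power3_eq_cube)
qed

lemma cusp_eq_cusp_ellipse:
  fixes a b u :: real and i :: nat
  assumes "a \<noteq> 0" "b \<noteq> 0"
  shows "cusp a b u i = cusp_ellipse a b u (u/3 + 2*pi*(real i - 1)/3)"
proof -
  define t where "t = - u/3 - 2*pi*(real i - 1)/3"
  have "3*t = - (u + 2*pi*of_int (int i - 1))" unfolding t_def by simp
  then have "cos u = cos (3*t)" "sin u = - sin (3*t)"
    by (simp_all only: cos_minus sin_minus cos_add sin_add cos_int_2pin sin_int_2pin)
  moreover have "- t = u/3 + 2*pi*(real i - 1)/3" unfolding t_def by simp
  ultimately show ?thesis
    unfolding cusp_def t_def[symmetric] using neg_pedal_eq_cusp_ellipse assms by metis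
qed

theorem proposition4p4:
  fixes a b c u :: real
  assumes "a > b" "b > 0" "c > 0" "c^2 = a^2 - b^2"
  shows "steiner_point (cusp a b u 1) (cusp a b u 2) (cusp a b u 3)
           (Complex ((a^2 - 2 * b^2) / a * cos u) (- (2 * a^2 - b^2) / b * sin u))"
proof -
  \<comment> \<open>c only names the focal distance.\<close>
  have "a \<noteq> 0" "b \<noteq> 0" "a^2 - b^2 > 0"
    using assms(1,2) by (simp_all add: power_strict_mono)
  then have "3 * (a^2 - b^2) / (2*a) > 0" "3 * (a^2 - b^2) / (2*b) > 0"
      "3 * (a^2 - b^2) / (2*a) \<noteq> 3 * (a^2 - b^2) / (2*b)"
    using assms(1,2) by (auto simp: field_simps)
  then have "steiner_point (cusp_ellipse a b u (u/3)) (cusp_ellipse a b u (u/3 + 2*pi/3))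
      (cusp_ellipse a b u (u/3 + 4*pi/3)) (cusp_ellipse a b u (-3*(u/3)))"
    unfolding cusp_ellipse_def by (rule steiner_point_ellipse_thirds)
  moreover have "cusp a b u 1 = cusp_ellipse a b u (u/3)"
      "cusp a b u 2 = cusp_ellipse a b u (u/3 + 2*pi/3)"
      "cusp a b u 3 = cusp_ellipse a b u (u/3 + 4*pi/3)"
    using cusp_eq_cusp_ellipse \<open>a \<noteq> 0\<close> \<open>b \<noteq> 0\<close> by auto
  moreover have "cusp_ellipse a b u (-3*(u/3))
      = Complex ((a^2 - 2 * b^2) / a * cos u) (- (2 * a^2 - b^2) / b * sin u)"
    unfolding cusp_ellipse_def ellipse_point_def using \<open>a \<noteq> 0\<close> \<open>b \<noteq> 0\<close>
    by (simp add: complex_eq_iff field_simps)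
  ultimately show ?thesis by simp
qed

end
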